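(* Let $\mathfrak m,\mathfrak n\in\mathrm{Mult}^{\mathrm{ul}}$, and let $\Delta\in\mathfrak p_{\mathfrak m,\mathfrak n}$ and $\Delta'\in\mathfrak q_{\mathfrak m,\mathfrak n}$. Then at least one of the following holds: (i) $s(\Delta)>s(\Delta')$; (ii) $e(\Delta)>e(\Delta')$; (iii) $\mathrm{csupp}(\Delta)\cap\mathrm{csupp}(\Delta')=\emptyset$.
   Context: $F$ non-archimedean local field, $\nu=|\det(\cdot)|_F$. For cuspidal $\rho$ and reals $a,b$ with $b-a\in\mathbb Z_{\ge0}$, $[a,b]_\rho=\{\nu^a\rho,\dots,\nu^b\rho\}$, $[a,a-1]_\rho=\emptyset$, $s([a,b]_\rho)=\nu^a\rho$, $e([a,b]_\rho)=\nu^b\rho$, $\mathrm{csupp}([a,b]_\rho)$ the set $\{\nu^a\rho,\dots,\nu^b\rho\}$; for cuspidals in one line, $\nu^x\rho>\nu^y\rho$ means $x>y$. Linked: $a<a'\le b+1<b'+1$ or $a'<a\le b'+1<b+1$ (different cuspidal lines: unlinked). $\mathrm{Mult}^{\mathrm{ul}}$ (resp. $\mathrm{Mult}^{\mathrm{ul}}_\rho$): finite multisets of nonempty segments (resp. of the form $[x,y]_\rho$), pairwise unlinked. Construction. For $\mathfrak m_\rho,\mathfrak n_\rho\in\mathrm{Mult}^{\mathrm{ul}}_\rho$: $\mathfrak m_1=\mathfrak m_\rho$, $\mathfrak n_1=\mathfrak n_\rho$; at step $i$ let $\nu^{a_i}\rho$ be the minimal $s(\Delta)$, $\Delta\in\mathfrak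 m_i$, and $[a_i,b_i]_\rho$ the longest segment of $\mathfrak m_i$ beginning there; if $\{[a',b']_\rho\in\mathfrak n_i:a_i\le a'\le b_i\le b'\}\neq\emptyset$ let $[a'_i,b'_i]_\rho$ be its longest element, otherwise $[a'_i,b'_i]_\rho=\emptyset$; $\mathfrak m_{i+1}=\mathfrak m_i-[a_i,b_i]_\rho$, $\mathfrak n_{i+1}=\mathfrak n_i-[a'_i,b'_i]_\rho$; stop when $\mathfrak m_{k+1}=\emptyset$. $\mathfrak p_{\mathfrak m_\rho,\mathfrak n_\rho}=\sum_{i=1}^k[a_i,a'_i-1]_\rho$, $\mathfrak q_{\mathfrak m_\rho,\mathfrak n_\rho}=\sum_{i=1}^k[b_i+1,b'_i]_\rho+\mathfrak n_{k+1}$, with $[a_i,a'_i-1]_\rho:=[a_i,b_i]_\rho$ and $[b_i+1,b'_i]_\rho:=\emptyset$ when $[a'_i,b'_i]_\rho=\emptyset$ (empty segments omitted). For $\mathfrak m,\mathfrak n\in\mathrm{Mult}^{\mathrm{ul}}$ write $\mathfrak m=\sum_i\mathfrak m_{\rho_i}$, $\mathfrak n=\sum_i\mathfrak n_{\rho_i}$ with $\mathfrak m_{\rho_i},\mathfrak n_{\rho_i}\in\mathrm{Mult}^{\mathrm{ul}}_{\rho_i}$ (possibly empty), $\rho_i\not\cong\nu^x\rho_j$ for $i\neq j$, and put $\mathfrak p_{\mathfrak m,\mathfrak n}=\sum_i\mathfrak p_{\mathfrak m_{\rho_i},\mathfrak n_{\rho_i}}$, $\mathfrak q_{\mathfrak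 m,\mathfrak n}=\sum_i\mathfrak q_{\mathfrak m_{\rho_i},\mathfrak n_{\rho_i}}$. *)

theory Defs
  imports Main "HOL-Library.Multiset"
begin

text \<open>Cuspidal representations: a cuspidal line {nu^k rho : k in Z} is indexed by an
abstract label of type 'l; the cuspidal nu^k rho is represented by the pair (l, k).
A segment [a,b]_rho on the line l is represented by Seg l a b (nonempty iff a \<le> b).\<close>

datatype 'l seg = Seg (line: 'l) (lo: int) (hi: int)

type_synonym 'l cusp = "'l \<times> int"

definition s_seg :: "'l seg \<Rightarrow> 'l cusp" where
  "s_seg D = (line D, lo D)"

definition e_seg :: "'l seg \<Rightarrow> 'l cusp" where
  "e_seg D = (line D, hi D)"

definition csupp :: "'l seg \<Rightarrow> 'l cusp set" where
  "csupp D = {(line D, k) | k. lo D \<le> k \<and> k \<le> hi D}"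

definition cusp_gt :: "'l cusp \<Rightarrow> 'l cusp \<Rightarrow> bool" where
  "cusp_gt x y \<longleftrightarrow> fst x = fst y \<and> snd x > snd y"

definition linked :: "'l seg \<Rightarrow> 'l seg \<Rightarrow> bool" where
  "linked D D' \<longleftrightarrow> line D = line D' \<and>
     ((lo D < lo D' \<and> lo D' \<le> hi D + 1 \<and> hi D + 1 < hi D' + 1) \<or>
      (lo D' < lo D \<and> lo D \<le> hi D' + 1 \<and> hi D' + 1 < hi D + 1))"

definition Mult_ul :: "'l seg multiset set" where
  "Mult_ul = {m. (\<forall>D\<in>#m. lo D \<le> hi D) \<and> (\<forall>D\<in>#m. \<forall>D'\<in>#m. \<not> linked D D')}"

definition add_seg :: "'l seg \<Rightarrow> 'l seg multiset \<Rightarrow> 'l seg multiset" where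
  "add_seg D M = (if lo D \<le> hi D then add_mset D M else M)"

inductive pq_run :: "'l \<Rightarrow> 'l seg multiset \<Rightarrow> 'l seg multiset \<Rightarrow> 'l seg multiset \<Rightarrow> 'l seg multiset \<Rightarrow> bool"
  for l where
  stop: "pq_run l {#} n {#} n"
| match: "\<lbrakk> m \<noteq> {#};
     a = Min (lo ` set_mset m);
     b = Max {hi D | D. D \<in># m \<and> lo D = a};
     Seg l a' b' \<in># n; a \<le> a'; a' \<le> b; b \<le> b';
     \<forall>D\<in>#n. (a \<le> lo D \<and> lo D \<le> b \<and> b \<le> hi D) \<longrightarrow> hi D - lo D \<le> b' - a';
     pq_run l (m - {#Seg l a b#}) (n - {#Seg l a' b'#}) p q \<rbrakk>
   \<Longrightarrow> pq_run l m n (add_seg (Seg l a (a' - 1)) p) (add_seg (Seg l (b + 1) b') q)"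
| nomatch: "\<lbrakk> m \<noteq> {#};
     a = Min (lo ` set_mset m);
     b = Max {hi D | D. D \<in># m \<and> lo D = a};
     \<not> (\<exists>D\<in>#n. a \<le> lo D \<and> lo D \<le> b \<and> b \<le> hi D);
     pq_run l (m - {#Seg l a b#}) n p q \<rbrakk>
   \<Longrightarrow> pq_run l m n (add_mset (Seg l a b) p) q"

definition restr :: "'l \<Rightarrow> 'l seg multiset \<Rightarrow> 'l seg multiset" where
  "restr l m = filter_mset (\<lambda>D. line D = l) m"

definition pq :: "'l seg multiset \<Rightarrow> 'l seg multiset \<Rightarrow> 'l seg multiset \<Rightarrow> 'l seg multiset \<Rightarrow> bool" where
  "pq m n p q \<longleftrightarrow> (\<exists>P Q. (\<forall>l. pq_run l (restr l m) (restr l n) (P l) (Q l)) \<and>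
      p = (\<Sum>l\<in>line ` set_mset (m + n). P l) \<and> q = (\<Sum>l\<in>line ` set_mset (m + n). Q l))"

end

theory Submission
  imports Defs
begin

text \<open>On a single cuspidal line the conclusion fails exactly when \<Delta>' begins inside \<Delta>
  and ends at or after it, the same relation by which the construction selects partners.
  The segments of p are prefixes of segments of m, and those of q either belong to n or are
  right ends [b + 1, b'] of partners. Running along the construction, a new \<Delta> crossing some
  \<Delta>' would yield a segment of n that is linked to the chosen partner or longer than it, or
  would contradict the absence of a partner; an old \<Delta> crossing the new [b + 1, b'] would
  yield a segment of m linked to the current lowest longest segment [a, b].\<close>

definition right_overlapping :: "'l seg \<Rightarrow> 'l seg \<Rightarrow> bool" where
  "right_overlapping D D' \<longleftrightarrow> lo D \<le> lo D' \<and> lo D' \<le> hi D \<and> hi D \<le> hi D'"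

lemma cusp_gt_or_csupp_disjoint_iff:
  assumes "line D = line D'"
  shows "cusp_gt (s_seg D) (s_seg D') \<or> cusp_gt (e_seg D) (e_seg D') \<or> csupp D \<inter> csupp D' = {}
    \<longleftrightarrow> \<not> right_overlapping D D'"
  using assms by (auto simp: cusp_gt_def s_seg_def e_seg_def csupp_def right_overlapping_def)

lemma Mult_ul_subset:
  assumes "m \<in> Mult_ul" "m' \<subseteq># m"
  shows "m' \<in> Mult_ul"
  using assms by (auto simp: Mult_ul_def dest: mset_subset_eqD)

lemma Mult_ul_restr: "m \<in> Mult_ul \<Longrightarrow> restr l m \<in> Mult_ul"
  by (erule Mult_ul_subset) (simp add: restr_def)

lemma line_restr: "\<forall>A\<in>#restr l m. line A = l"
  by (simp add: restr_def)

lemma lowest_longest_segment: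
  assumes "m \<noteq> {#}" "a = Min (lo ` set_mset m)" "b = Max {hi D | D. D \<in># m \<and> lo D = a}"
  shows "\<exists>A\<in>#m. lo A = a \<and> hi A = b" and "\<forall>A\<in>#m. a \<le> lo A"
    and "\<forall>A\<in>#m. lo A = a \<longrightarrow> hi A \<le> b"
proof -
  have "a \<in> lo ` set_mset m"
    using assms(1,2) by simp
  then obtain A0 where "A0 \<in># m" "lo A0 = a"
    by auto
  moreover have fin: "finite {hi D | D. D \<in># m \<and> lo D = a}"
    by (rule finite_subset[of _ "hi ` set_mset m"]) auto
  ultimately have "b \<in> {hi D | D. D \<in># m \<and> lo D = a}"
    using Max_in assms(3) by blast
  then show "\<exists>A\<in>#m. lo A = a \<and> hi A = b"
    by auto
  show "\<forall>A\<in>#m. a \<le> lo A"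
    using assms(2) by simp
  show "\<forall>A\<in>#m. lo A = a \<longrightarrow> hi A \<le> b"
    using Max_ge[OF fin] assms(3) by blast
qed

lemma pq_run_p_prefix:
  assumes "pq_run l m n p q" "D \<in># p"
  shows "\<exists>A\<in>#m. lo A = lo D \<and> hi D \<le> hi A \<and> line D = l"
  using assms
proof (induction arbitrary: D rule: pq_run.induct)
  case (stop n)
  then show ?case by simp
next
  case (match m a b a' b' n p q)
  obtain A where "A \<in># m" "lo A = a" "hi A = b"
    using lowest_longest_segment(1)[OF match.hyps(1-3)] by blast
  with match.IH match.prems match.hyps(6) show ?case
    by (auto simp: add_seg_def split: if_splits dest: in_diffD)
next
  case (nomatch m a b n p q)
  obtain A where "A \<in># m" "lo A = a" "hi A = b"
    using lowest_longest_segment(1)[OF nomatch.hyps(1-3)] by blast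
  with nomatch.IH nomatch.prems show ?case
    by (auto dest: in_diffD)
qed

lemma pq_run_q_cases:
  assumes "pq_run l m n p q" "D' \<in># q"
  shows "D' \<in># n \<or> (\<exists>A\<in>#m. \<exists>B\<in>#n. right_overlapping A B \<and> hi A < hi B \<and>
    D' = Seg l (hi A + 1) (hi B))"
  using assms
proof (induction arbitrary: D' rule: pq_run.induct)
  case (stop n)
  then show ?case by simp
next
  case (match m a b a' b' n p q)
  obtain A where "A \<in># m" "lo A = a" "hi A = b"
    using lowest_longest_segment(1)[OF match.hyps(1-3)] by blast
  with match.IH match.prems match.hyps(4-7) show ?case
    by (auto simp: add_seg_def right_overlapping_def split: if_splits dest: in_diffD) force+
next
  case (nomatch m a b n p q)
  then show ?case by (meson in_diffD)
qed

text \<open>Unlinkedness forces such a segment B to end at or after b', and then it would be a longer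
  candidate partner for [a, b] than [a', b'].\<close>

lemma longest_partner_no_straddle:
  assumes "n \<in> Mult_ul" "\<forall>B\<in>#n. line B = l"
    and "Seg l a' b' \<in># n" "a' \<le> b" "b \<le> b'"
    and "\<forall>D\<in>#n. (a \<le> lo D \<and> lo D \<le> b \<and> b \<le> hi D) \<longrightarrow> hi D - lo D \<le> b' - a'"
    and "B \<in># n" "a \<le> lo B" "lo B < a'" "a' \<le> hi B + 1"
  shows False
proof -
  have "\<not> linked B (Seg l a' b')"
    using assms(1,3,7) by (auto simp: Mult_ul_def)
  then have "b' \<le> hi B"
    using assms(2,7,9,10) by (auto simp: linked_def)
  then show False
    using assms(4-10) by fastforce
qed

lemma pq_run_not_right_overlapping:
  assumes "pq_run l m n p q" "m \<in> Mult_ul" "n \<in> Mult_ul"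
    and "\<forall>A\<in>#m. line A = l" "\<forall>B\<in>#n. line B = l"
    and "D \<in># p" "D' \<in># q"
  shows "\<not> right_overlapping D D'"
  using assms
proof (induction arbitrary: D D' rule: pq_run.induct)
  case (stop n)
  then show ?case by simp
next
  case (match m a b a' b' n p q)
  note lowest = lowest_longest_segment[OF match.hyps(1-3)]
  have "Seg l a b \<in># m"
    using lowest(1) match.prems(3) by (metis seg.collapse)
  have no_straddle: "hi B + 1 < a'" if "B \<in># n" "a \<le> lo B" "lo B < a'" for B
    using longest_partner_no_straddle[OF match.prems(2,4) match.hyps(4,6,7,8) that] by force
  have IH: "\<not> right_overlapping D D'" if "D \<in># p" "D' \<in># q" for D D'
    using match.IH[OF Mult_ul_subset[OF match.prems(1)] Mult_ul_subset[OF match.prems(2)] _ _ that]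
      match.prems(3,4) by (auto dest: in_diffD)
  have new_p: "\<not> right_overlapping (Seg l a (a' - 1)) D'"
    if D': "D' \<in># add_seg (Seg l (b + 1) b') q" for D'
  proof -
    consider "D' = Seg l (b + 1) b'" | "D' \<in># q"
      using D' by (auto simp: add_seg_def split: if_splits)
    then show ?thesis
    proof cases
      case 1
      with match.hyps(6) show ?thesis
        by (simp add: right_overlapping_def)
    next
      case 2
      from pq_run_q_cases[OF match.hyps(9) this] show ?thesis
      proof (elim disjE bexE conjE)
        assume "D' \<in># n - {#Seg l a' b'#}"
        then show ?thesis
          using no_straddle[of D'] by (force simp: right_overlapping_def dest: in_diffD)
      next
        fix A B
        assume "A \<in># m - {#Seg l a b#}" "B \<in># n - {#Seg l a' b'#}" "right_overlapping A B"
          "D' = Seg l (hi A + 1) (hi B)"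
        then show ?thesis
          using no_straddle[of B] lowest(2) by (force simp: right_overlapping_def dest: in_diffD)
      qed
    qed
  qed
  have new_q: "\<not> right_overlapping D (Seg l (b + 1) b')" if D: "D \<in># p" for D
  proof
    assume overlap: "right_overlapping D (Seg l (b + 1) b')"
    obtain A where A: "A \<in># m" "lo A = lo D" "hi D \<le> hi A"
      using pq_run_p_prefix[OF match.hyps(9) D] by (auto dest: in_diffD)
    then have "lo A \<noteq> a"
      using lowest(3) overlap by (force simp: right_overlapping_def)
    then have "linked (Seg l a b) A"
      using A lowest(2) overlap match.prems(3) by (force simp: linked_def right_overlapping_def)
    then show False
      using \<open>Seg l a b \<in># m\<close> A(1) match.prems(1) by (auto simp: Mult_ul_def)
  qed
  from match.prems(5,6) new_p new_q IH show ?case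
    by (auto simp: add_seg_def split: if_splits)
next
  case (nomatch m a b n p q)
  note lowest = lowest_longest_segment[OF nomatch.hyps(1-3)]
  have new_p: "\<not> right_overlapping (Seg l a b) D'" if "D' \<in># q" for D'
    using pq_run_q_cases[OF nomatch.hyps(5) that] lowest(2) nomatch.hyps(4)
    by (auto simp: right_overlapping_def dest!: in_diffD)
  have IH: "\<not> right_overlapping D D'" if "D \<in># p" "D' \<in># q" for D D'
    using nomatch.IH[OF Mult_ul_subset[OF nomatch.prems(1)] nomatch.prems(2) _ nomatch.prems(4) that]
      nomatch.prems(3) by (auto dest: in_diffD)
  from nomatch.prems(5,6) new_p IH show ?case
    by auto
qed

theorem lemma5p2:
  fixes m n p q :: "'l seg multiset" and D D' :: "'l seg"
  assumes "m \<in> Mult_ul" and "n \<in> Mult_ul"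
    and "pq m n p q"
    and "D \<in># p" and "D' \<in># q"
  shows "cusp_gt (s_seg D) (s_seg D') \<or> cusp_gt (e_seg D) (e_seg D') \<or> csupp D \<inter> csupp D' = {}"
proof -
  obtain P Q where run: "\<And>l. pq_run l (restr l m) (restr l n) (P l) (Q l)"
    and p: "p = (\<Sum>l\<in>line ` set_mset (m + n). P l)"
    and q: "q = (\<Sum>l\<in>line ` set_mset (m + n). Q l)"
    using assms(3) unfolding pq_def by blast
  obtain l l' where D: "D \<in># P l" and D': "D' \<in># Q l'"
    using assms(4,5) unfolding p q set_mset_sum[OF finite_imageI[OF finite_set_mset]] by blast
  have lines: "line D = l" "line D' = l'"
    using pq_run_p_prefix[OF run D] pq_run_q_cases[OF run D'] line_restr[of l' n] by auto
  show ?thesis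
  proof (cases "l = l'")
    case True
    have "\<not> right_overlapping D D'"
      by (rule pq_run_not_right_overlapping[OF run Mult_ul_restr[OF assms(1)]
            Mult_ul_restr[OF assms(2)] line_restr line_restr D D'[folded True]])
    with True lines show ?thesis
      by (simp add: cusp_gt_or_csupp_disjoint_iff)
  next
    case False
    with lines have "csupp D \<inter> csupp D' = {}"
      by (auto simp: csupp_def)
    then show ?thesis by blast
  qed
qed

end
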